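(* Let $U$ be a $5$-unitrade with $|U|=12$. Then either $U=W\cup W'$ where $W,W'$ are disjoint $5$-unitrades each equivalent to $W_5$, or $U$ is equivalent to $S=\{\{1,2,3,5,6\}, \{1,2,4,5,6\}, \{1,3,4,5,6\}, \{2,3,4,5,6\}, \{1,2,3,5,7\}, \{1,2,4,5,7\}, \{1,3,4,5,7\}, \{2,3,4,5,7\}, \{1,2,3,6,7\}, \{1,2,4,6,7\}, \{1,3,4,6,7\}, \{2,3,4,6,7\}\}$.
   Context: A $k$-unitrade on a finite set $V$ is a set $U$ of $k$-element subsets (blocks) of $V$ such that every $(k-1)$-element subset of $V$ is contained in an even number of blocks of $U$. Two collections $U_1$ of subsets of $V_1$ and $U_2$ of subsets of $V_2$ are equivalent if there is an injection $f:V_1\to V_2$ with $U_2=\{f(u): u\in U_1\}$. $W_5$ denotes the set of all $5$-element subsets of a $6$-element set. *)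

theory Defs
  imports Main
begin

definition unitrade :: "nat \<Rightarrow> 'a set \<Rightarrow> 'a set set \<Rightarrow> bool" where
  "unitrade k V U \<longleftrightarrow> finite V \<and> (\<forall>b\<in>U. b \<subseteq> V \<and> card b = k) \<and>
     (\<forall>T. T \<subseteq> V \<longrightarrow> card T = k - 1 \<longrightarrow> even (card {b\<in>U. T \<subseteq> b}))"

definition equivalent :: "'a set \<Rightarrow> 'a set set \<Rightarrow> 'b set \<Rightarrow> 'b set set \<Rightarrow> bool" where
  "equivalent V1 U1 V2 U2 \<longleftrightarrow>
     (\<exists>f. inj_on f V1 \<and> f ` V1 \<subseteq> V2 \<and> U2 = (\<lambda>u. f ` u) ` U1)"

definition W5 :: "nat set set" where
  "W5 = {b. b \<subseteq> {1..6} \<and> card b = 5}"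

definition S_trade :: "nat set set" where
  "S_trade = {{1,2,3,5,6}, {1,2,4,5,6}, {1,3,4,5,6}, {2,3,4,5,6},
              {1,2,3,5,7}, {1,2,4,5,7}, {1,3,4,5,7}, {2,3,4,5,7},
              {1,2,3,6,7}, {1,2,4,6,7}, {1,3,4,6,7}, {2,3,4,6,7}}"

end

(*
  Fix a point x of some block of the 5-unitrade U and split U into the residual at x (the
  blocks avoiding x) and the derived trade at x (the blocks through x with x removed), which
  is a 4-unitrade. A nonempty k-unitrade has at least k + 1 blocks, with equality only for
  the k-subsets of a (k + 1)-set, and otherwise at least 2k blocks. When the derived trade is
  complete on a set A, the symmetric difference of U with the complete trade on insert x A is
  again a trade, contained in the residual up to the block A.

  For |U| = 12 this shows that either U is the union of the 5-subsets of two 6-sets, or every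
  point lies in 8 or 9 blocks. In the second case double counting leaves exactly 7 points, so
  every block omits exactly two of them. The parity condition on the 4-sets says that every
  triangle of the graph of omitted pairs has an even number of edges, so this graph is complete
  bipartite with 12 edges on 7 vertices, i.e. K(4,3), which is the shape of S.
*)

theory Submission
  imports Defs
begin

definition subsets_of_card :: "nat \<Rightarrow> 'a set \<Rightarrow> 'a set set" where
  "subsets_of_card k A = {B. B \<subseteq> A \<and> card B = k}"

definition derived :: "'a set set \<Rightarrow> 'a \<Rightarrow> 'a set set" where
  "derived U x = (\<lambda>b. b - {x}) ` {b\<in>U. x \<in> b}"

definition residual :: "'a set set \<Rightarrow> 'a \<Rightarrow> 'a set set" where
  "residual U x = {b\<in>U. x \<notin> b}"

definition union_of_two_complete :: "nat \<Rightarrow> 'a set \<Rightarrow> 'a set set \<Rightarrow> bool" where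
  "union_of_two_complete k V U \<longleftrightarrow> (\<exists>B1 B2. B1 \<subseteq> V \<and> B2 \<subseteq> V \<and> card B1 = Suc k \<and> card B2 = Suc k \<and>
     U = subsets_of_card k B1 \<union> subsets_of_card k B2)"

lemma unitradeI:
  assumes "finite V" "\<And>b. b \<in> U \<Longrightarrow> b \<subseteq> V \<and> card b = k"
    "\<And>T. T \<subseteq> V \<Longrightarrow> card T = k - 1 \<Longrightarrow> even (card {b\<in>U. T \<subseteq> b})"
  shows "unitrade k V U"
  using assms unfolding unitrade_def by blast

lemma unitrade_block: "unitrade k V U \<Longrightarrow> b \<in> U \<Longrightarrow> b \<subseteq> V \<and> card b = k"
  unfolding unitrade_def by blast

lemma unitrade_even:
  "unitrade k V U \<Longrightarrow> T \<subseteq> V \<Longrightarrow> card T = k - 1 \<Longrightarrow> even (card {b\<in>U. T \<subseteq> b})"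
  unfolding unitrade_def by blast

lemma unitrade_finite_points: "unitrade k V U \<Longrightarrow> finite V"
  unfolding unitrade_def by blast

lemma unitrade_finite: "unitrade k V U \<Longrightarrow> finite U"
  by (metis unitrade_block unitrade_finite_points Pow_iff finite_Pow_iff finite_subset subsetI)

lemma unitrade_finite_block: "unitrade k V U \<Longrightarrow> b \<in> U \<Longrightarrow> finite b"
  by (meson unitrade_block unitrade_finite_points finite_subset)

lemma unitrade_sym_diff:
  assumes U1: "unitrade k V U1" and U2: "unitrade k V U2"
  shows "unitrade k V (sym_diff U1 U2)"
proof (rule unitradeI)
  show "finite V" using unitrade_finite_points[OF U1] .
  show "b \<subseteq> V \<and> card b = k" if "b \<in> sym_diff U1 U2" for b
    using that unitrade_block[OF U1] unitrade_block[OF U2] by blast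
next
  fix T assume T: "T \<subseteq> V" "card T = k - 1"
  define F1 F2 where "F1 = {b\<in>U1. T \<subseteq> b}" and "F2 = {b\<in>U2. T \<subseteq> b}"
  have fin: "finite F1" "finite F2"
    unfolding F1_def F2_def using unitrade_finite[OF U1] unitrade_finite[OF U2] by auto
  have "card {b\<in>sym_diff U1 U2. T \<subseteq> b} = card (sym_diff F1 F2)"
    unfolding F1_def F2_def by (rule arg_cong[where f = card]) blast
  also have "\<dots> + 2 * card (F1 \<inter> F2) = card F1 + card F2"
    using fin card_Int_Diff[of F1 F2] card_Int_Diff[of F2 F1]
    by (simp add: card_Un_disjoint[of "F1 - F2" "F2 - F1"] Int_commute Diff_Int_distrib2 Int_Diff)
  finally show "even (card {b\<in>sym_diff U1 U2. T \<subseteq> b})"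
    using unitrade_even[OF U1 T] unitrade_even[OF U2 T] unfolding F1_def F2_def by presburger
qed

lemma finite_subsets_of_card: "finite A \<Longrightarrow> finite (subsets_of_card k A)"
  unfolding subsets_of_card_def by simp

lemma card_subsets_of_card: "finite A \<Longrightarrow> card (subsets_of_card k A) = card A choose k"
  unfolding subsets_of_card_def by (rule n_subsets)

lemma card_subsets_of_card_Suc:
  "card A = Suc k \<Longrightarrow> card (subsets_of_card k A) = Suc k"
  by (metis card_subsets_of_card binomial_Suc_n card.infinite nat.distinct(1))

lemma subsets_of_card_insert:
  assumes "finite A" "x \<notin> A" "card A = Suc k"
  shows "subsets_of_card (Suc k) (insert x A) = insert A (insert x ` subsets_of_card k A)"
proof (intro equalityI subsetI)
  fix B assume "B \<in> subsets_of_card (Suc k) (insert x A)"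
  then have B: "B \<subseteq> insert x A" "card B = Suc k"
    unfolding subsets_of_card_def by auto
  with assms have "finite B" by (meson finite_insert finite_subset)
  show "B \<in> insert A (insert x ` subsets_of_card k A)"
  proof (cases "x \<in> B")
    case True
    then have "B = insert x (B - {x})" "B - {x} \<in> subsets_of_card k A"
      using B \<open>finite B\<close> unfolding subsets_of_card_def by auto
    then show ?thesis by blast
  next
    case False
    then have "B = A"
      using B assms by (metis card_subset_eq subset_insert)
    then show ?thesis by simp
  qed
next
  fix B assume "B \<in> insert A (insert x ` subsets_of_card k A)"
  then show "B \<in> subsets_of_card (Suc k) (insert x A)"
    using assms unfolding subsets_of_card_def
    by (auto simp: card_insert_if rev_finite_subset[of A])
qed

lemma image_subsets_of_card:
  assumes "inj_on f A"
  shows "image f ` subsets_of_card k A = subsets_of_card k (f ` A)"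
proof (intro equalityI subsetI)
  fix C assume "C \<in> image f ` subsets_of_card k A"
  then show "C \<in> subsets_of_card k (f ` A)"
    using assms unfolding subsets_of_card_def by (auto simp: card_image inj_on_subset)
next
  fix C assume C: "C \<in> subsets_of_card k (f ` A)"
  define B where "B = {a\<in>A. f a \<in> C}"
  have "f ` B = C" "B \<subseteq> A"
    using C unfolding B_def subsets_of_card_def by auto
  then have "B \<in> subsets_of_card k A"
    using C assms unfolding subsets_of_card_def by (metis (mono_tags) card_image inj_on_subset mem_Collect_eq)
  then show "C \<in> image f ` subsets_of_card k A"
    using \<open>f ` B = C\<close> by blast
qed

lemma subsets_of_card_Suc_containing:
  assumes "finite T" "T \<subseteq> A" "card T = k"
  shows "{B\<in>subsets_of_card (Suc k) A. T \<subseteq> B} = (\<lambda>a. insert a T) ` (A - T)"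
proof (intro equalityI subsetI)
  fix B assume "B \<in> {B\<in>subsets_of_card (Suc k) A. T \<subseteq> B}"
  then have B: "B \<subseteq> A" "card B = Suc k" "T \<subseteq> B"
    unfolding subsets_of_card_def by auto
  then have "card (B - T) = 1"
    using assms by (simp add: card_Diff_subset)
  then obtain a where "B - T = {a}" by (meson card_1_singletonE)
  then have "B = insert a T" "a \<in> A - T" using B by auto
  then show "B \<in> (\<lambda>a. insert a T) ` (A - T)" by blast
next
  fix B assume "B \<in> (\<lambda>a. insert a T) ` (A - T)"
  then show "B \<in> {B\<in>subsets_of_card (Suc k) A. T \<subseteq> B}"
    using assms unfolding subsets_of_card_def by auto
qed

lemma unitrade_subsets_of_card:
  assumes "finite V" "A \<subseteq> V" "card A = Suc (Suc k)"
  shows "unitrade (Suc k) V (subsets_of_card (Suc k) A)"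
proof (rule unitradeI)
  show "finite V" by fact
  show "B \<subseteq> V \<and> card B = Suc k" if "B \<in> subsets_of_card (Suc k) A" for B
    using that assms unfolding subsets_of_card_def by auto
next
  fix T assume T: "T \<subseteq> V" "card T = Suc k - 1"
  have "finite A" using assms finite_subset by blast
  show "even (card {B\<in>subsets_of_card (Suc k) A. T \<subseteq> B})"
  proof (cases "T \<subseteq> A")
    case False
    then have "{B\<in>subsets_of_card (Suc k) A. T \<subseteq> B} = {}"
      unfolding subsets_of_card_def by blast
    then show ?thesis by (metis card.empty even_zero)
  next
    case True
    have "finite T" using True \<open>finite A\<close> finite_subset by blast
    have "inj_on (\<lambda>a. insert a T) (A - T)"
      by (rule inj_onI) blast
    then have "card {B\<in>subsets_of_card (Suc k) A. T \<subseteq> B} = card (A - T)"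
      using subsets_of_card_Suc_containing[OF \<open>finite T\<close> True] T(2) by (simp add: card_image)
    also have "\<dots> = 2"
      using True T assms \<open>finite T\<close> by (simp add: card_Diff_subset)
    finally show ?thesis by simp
  qed
qed

lemma notin_derived: "T \<in> derived U x \<Longrightarrow> x \<notin> T"
  unfolding derived_def by auto

lemma derived_iff: "x \<notin> T \<Longrightarrow> T \<in> derived U x \<longleftrightarrow> insert x T \<in> U"
  unfolding derived_def by (auto simp: insert_absorb)

lemma insert_derived: "insert x ` derived U x = {b\<in>U. x \<in> b}"
  unfolding derived_def image_image by (auto simp: insert_absorb)

lemma residual_Un_derived: "U = residual U x \<union> insert x ` derived U x"
  unfolding insert_derived residual_def by blast

lemma card_derived: "card (derived U x) = card {b\<in>U. x \<in> b}"
proof -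
  have "inj_on (\<lambda>b. b - {x}) {b\<in>U. x \<in> b}"
    by (rule inj_onI) (metis insert_Diff mem_Collect_eq)
  then show ?thesis
    unfolding derived_def by (rule card_image)
qed

lemma card_residual_derived:
  assumes "finite U"
  shows "card U = card (derived U x) + card (residual U x)"
proof -
  have "card U = card {b\<in>U. x \<in> b} + card (residual U x)"
    unfolding residual_def using assms
    by (subst card_Un_disjoint[symmetric]) (auto intro: arg_cong[where f = card])
  then show ?thesis by (simp add: card_derived)
qed

lemma unitrade_derived:
  assumes U: "unitrade (Suc (Suc k)) V U" and "x \<in> V"
  shows "unitrade (Suc k) V (derived U x)"
proof (rule unitradeI)
  show "finite V" using unitrade_finite_points[OF U] .
  show "T \<subseteq> V \<and> card T = Suc k" if "T \<in> derived U x" for T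
    using that unitrade_block[OF U] unfolding derived_def by auto
next
  fix T assume T: "T \<subseteq> V" "card T = Suc k - 1"
  show "even (card {S\<in>derived U x. T \<subseteq> S})"
  proof (cases "x \<in> T")
    case True
    then have "{S\<in>derived U x. T \<subseteq> S} = {}"
      by (auto dest: notin_derived)
    then show ?thesis by (metis card.empty even_zero)
  next
    case False
    have "finite T" using T unitrade_finite_points[OF U] finite_subset by blast
    have "{S\<in>derived U x. T \<subseteq> S} = (\<lambda>b. b - {x}) ` {b\<in>U. insert x T \<subseteq> b}"
      unfolding derived_def using False by auto
    moreover have "inj_on (\<lambda>b. b - {x}) {b\<in>U. insert x T \<subseteq> b}"
      by (rule inj_onI) (metis insert_Diff insert_subset mem_Collect_eq)
    moreover have "even (card {b\<in>U. insert x T \<subseteq> b})"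
      by (rule unitrade_even[OF U]) (use T False \<open>x \<in> V\<close> \<open>finite T\<close> in auto)
    ultimately show ?thesis by (simp add: card_image)
  qed
qed

lemma odd_residual_iff_derived:
  assumes U: "unitrade (Suc k) V U" and T: "T \<subseteq> V" "card T = k" and x: "x \<in> V" "x \<notin> T"
  shows "odd (card {b\<in>residual U x. T \<subseteq> b}) \<longleftrightarrow> T \<in> derived U x"
proof -
  have "finite T" using T unitrade_finite_points[OF U] finite_subset by blast
  have through_x: "{b\<in>U. insert x T \<subseteq> b} = {insert x T} \<inter> U"
  proof (intro equalityI subsetI)
    fix b assume b: "b \<in> {b\<in>U. insert x T \<subseteq> b}"
    then have "b = insert x T"
      using unitrade_block[OF U] unitrade_finite_block[OF U] T x \<open>finite T\<close>
      by (metis (mono_tags, lifting) card_insert_disjoint card_subset_eq mem_Collect_eq)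
    then show "b \<in> {insert x T} \<inter> U" using b by blast
  qed auto
  have split: "{b\<in>U. T \<subseteq> b} = {b\<in>residual U x. T \<subseteq> b} \<union> ({insert x T} \<inter> U)"
    unfolding residual_def through_x[symmetric] by auto
  have "card {b\<in>U. T \<subseteq> b} = card {b\<in>residual U x. T \<subseteq> b} + card ({insert x T} \<inter> U)"
    unfolding split
  proof (rule card_Un_disjoint)
    show "finite {b\<in>residual U x. T \<subseteq> b}"
      using unitrade_finite[OF U] unfolding residual_def by simp
    show "{b\<in>residual U x. T \<subseteq> b} \<inter> ({insert x T} \<inter> U) = {}"
      unfolding residual_def by blast
  qed simp
  moreover have "even (card {b\<in>U. T \<subseteq> b})"
    using unitrade_even[OF U T(1)] T(2) by simp
  ultimately show ?thesis
    using derived_iff[OF x(2)] by (cases "insert x T \<in> U") auto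
qed

lemma derived_subset_residual:
  assumes U: "unitrade (Suc k) V U" and "x \<in> V"
  shows "derived U x \<subseteq> (\<Union>C\<in>residual U x. subsets_of_card k C)"
proof
  fix T assume T: "T \<in> derived U x"
  obtain b where b: "b \<in> U" "x \<in> b" "T = b - {x}"
    using T unfolding derived_def by blast
  then have "T \<subseteq> V" "card T = k"
    using unitrade_block[OF U b(1)] unitrade_finite_block[OF U b(1)] by auto
  then have "odd (card {b\<in>residual U x. T \<subseteq> b})"
    using odd_residual_iff_derived[OF U _ _ \<open>x \<in> V\<close> notin_derived[OF T]] T by simp
  then obtain C where "C \<in> residual U x" "T \<subseteq> C"
    using odd_card_imp_not_empty by fastforce
  then show "T \<in> (\<Union>C\<in>residual U x. subsets_of_card k C)"
    using \<open>card T = k\<close> unfolding subsets_of_card_def by blast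
qed

lemma notin_complete_derived:
  assumes "derived U x = subsets_of_card (Suc k) A" "card A = Suc (Suc k)"
  shows "x \<notin> A"
proof
  assume "x \<in> A"
  have "finite A" using assms(2) card.infinite by fastforce
  then have "A - {x} \<noteq> {}"
    using assms(2) \<open>x \<in> A\<close> by (metis card_Diff_singleton card.empty diff_Suc_1 nat.distinct(1))
  then obtain a where a: "a \<in> A" "a \<noteq> x" by blast
  then have "A - {a} \<in> derived U x"
    using assms \<open>finite A\<close> unfolding subsets_of_card_def by simp
  then have "x \<notin> A - {a}" by (rule notin_derived)
  then show False using a \<open>x \<in> A\<close> by blast
qed

lemma sym_diff_complete_derived:
  assumes "derived U x = subsets_of_card k A" "card A = Suc k" "x \<notin> A"
  shows "sym_diff U (subsets_of_card (Suc k) (insert x A)) = sym_diff (residual U x) {A}"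
proof -
  define R X where "R = residual U x" and "X = insert x ` derived U x"
  have "finite A" using assms(2) card.infinite by fastforce
  have "U = R \<union> X" "R \<inter> X = {}"
    unfolding R_def X_def using residual_Un_derived[of U x] by (auto simp: residual_def)
  moreover have "subsets_of_card (Suc k) (insert x A) = insert A X" "A \<notin> X"
    unfolding X_def assms(1) using subsets_of_card_insert[OF \<open>finite A\<close> assms(3,2)] assms(3) by auto
  ultimately show ?thesis unfolding R_def[symmetric] by blast
qed

lemma card_sym_diff_singleton:
  "finite R \<Longrightarrow> card (sym_diff R {A}) = (if A \<in> R then card R - 1 else card R + 1)"
  by (cases "A \<in> R") (simp_all add: insert_Diff_if Un_commute)

lemma unitrade_blockE:
  assumes "unitrade (Suc k) V U" "U \<noteq> {}"
  obtains b x where "b \<in> U" "x \<in> b"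
  using assms unitrade_block by fastforce

lemma unitrade_split_at_point:
  assumes U: "unitrade (Suc (Suc k)) V U" and "b \<in> U" "x \<in> b"
  shows "x \<in> V" "unitrade (Suc k) V (derived U x)" "derived U x \<noteq> {}"
    "residual U x \<noteq> {}" "finite (residual U x)"
    "card U = card (derived U x) + card (residual U x)"
proof -
  show "x \<in> V" using unitrade_block[OF U \<open>b \<in> U\<close>] \<open>x \<in> b\<close> by blast
  then show "unitrade (Suc k) V (derived U x)" by (rule unitrade_derived[OF U])
  show "derived U x \<noteq> {}" using assms unfolding derived_def by blast
  with \<open>x \<in> V\<close> show "residual U x \<noteq> {}"
    using derived_subset_residual[OF U] by blast
  show "finite (residual U x)"
    using unitrade_finite[OF U] unfolding residual_def by simp
  show "card U = card (derived U x) + card (residual U x)"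
    by (rule card_residual_derived[OF unitrade_finite[OF U]])
qed

lemma unitrade_card_ge:
  "unitrade (Suc k) V U \<Longrightarrow> U \<noteq> {} \<Longrightarrow> k + 2 \<le> card U"
proof (induction k arbitrary: U)
  case 0
  have "even (card U)"
    using unitrade_even[OF "0.prems"(1), of "{}"] by simp
  moreover have "card U \<noteq> 0"
    using "0.prems" unitrade_finite[OF "0.prems"(1)] by simp
  ultimately show ?case by presburger
next
  case (Suc k)
  obtain b x where "b \<in> U" "x \<in> b"
    using unitrade_blockE[OF Suc.prems] .
  note S = unitrade_split_at_point[OF Suc.prems(1) this]
  have "k + 2 \<le> card (derived U x)" by (rule Suc.IH[OF S(2,3)])
  moreover have "card (residual U x) \<noteq> 0" using S(4,5) by simp
  ultimately show ?case using S(6) by simp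
qed

lemma derived_of_single_residual:
  assumes U: "unitrade (Suc (Suc k)) V U" and "b \<in> U" "x \<in> b" and R: "residual U x = {C}"
  shows "derived U x = subsets_of_card (Suc k) C" "C \<subseteq> V" "card C = Suc (Suc k)"
proof -
  note S = unitrade_split_at_point[OF U \<open>b \<in> U\<close> \<open>x \<in> b\<close>]
  have "C \<in> U" using R unfolding residual_def by blast
  then show C: "C \<subseteq> V" "card C = Suc (Suc k)"
    using unitrade_block[OF U] by simp_all
  have "derived U x \<subseteq> subsets_of_card (Suc k) C"
    using derived_subset_residual[OF U S(1)] R by simp
  moreover have "card (subsets_of_card (Suc k) C) \<le> card (derived U x)"
    using card_subsets_of_card_Suc[OF C(2)] unitrade_card_ge[OF S(2,3)] by simp
  ultimately show "derived U x = subsets_of_card (Suc k) C"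
    using C finite_subset[OF C(1) unitrade_finite_points[OF U]]
    by (intro card_seteq finite_subsets_of_card)
qed

lemma unitrade_toggle_residual:
  assumes U: "unitrade (Suc (Suc k)) V U" "x \<in> V"
    and A: "A \<subseteq> V" "card A = Suc (Suc k)" "derived U x = subsets_of_card (Suc k) A"
  shows "x \<notin> A"
    and "sym_diff U (subsets_of_card (Suc (Suc k)) (insert x A)) = sym_diff (residual U x) {A}"
    and "unitrade (Suc (Suc k)) V (sym_diff (residual U x) {A})"
proof -
  show "x \<notin> A" using notin_complete_derived[OF A(3,2)] .
  then show eq: "sym_diff U (subsets_of_card (Suc (Suc k)) (insert x A)) = sym_diff (residual U x) {A}"
    by (rule sym_diff_complete_derived[OF A(3,2)])
  have "finite A" using finite_subset[OF A(1) unitrade_finite_points[OF U(1)]] .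
  then have "unitrade (Suc (Suc k)) V (subsets_of_card (Suc (Suc k)) (insert x A))"
    using unitrade_finite_points[OF U(1)] A U(2) \<open>x \<notin> A\<close>
    by (intro unitrade_subsets_of_card) simp_all
  from unitrade_sym_diff[OF U(1) this, unfolded eq]
  show "unitrade (Suc (Suc k)) V (sym_diff (residual U x) {A})" .
qed

text \<open>Toggling \<open>A\<close> in the residual gives a trade, which is either empty or has at least
  \<open>k + 3\<close> blocks.\<close>

lemma complete_derived_imp_complete_or_large:
  assumes U: "unitrade (Suc (Suc k)) V U" "x \<in> V"
    and A: "A \<subseteq> V" "card A = Suc (Suc k)" "derived U x = subsets_of_card (Suc k) A"
  shows "(\<exists>A'. A' \<subseteq> V \<and> card A' = Suc k + 2 \<and> U = subsets_of_card (Suc (Suc k)) A')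
    \<or> 2 * (Suc k + 1) \<le> card U"
proof (cases "sym_diff (residual U x) {A} = {}")
  case True
  note T = unitrade_toggle_residual[OF U A]
  have "sym_diff U (subsets_of_card (Suc (Suc k)) (insert x A)) = {}"
    unfolding T(2) by (rule True)
  then have "U = subsets_of_card (Suc (Suc k)) (insert x A)" by blast
  moreover have "insert x A \<subseteq> V" "card (insert x A) = Suc k + 2"
    using A U(2) T(1) finite_subset[OF A(1) unitrade_finite_points[OF U(1)]] by simp_all
  ultimately show ?thesis by blast
next
  case False
  have "Suc k + 2 \<le> card (sym_diff (residual U x) {A})"
    by (rule unitrade_card_ge[OF unitrade_toggle_residual(3)[OF U A] False])
  moreover have "finite (residual U x)"
    using unitrade_finite[OF U(1)] unfolding residual_def by simp
  ultimately have "Suc k + 1 \<le> card (residual U x)"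
    using card_sym_diff_singleton[of "residual U x" A] by (simp split: if_splits)
  moreover have "card (derived U x) = Suc (Suc k)"
    using A card_subsets_of_card_Suc by simp
  ultimately show ?thesis
    using card_residual_derived[OF unitrade_finite[OF U(1)], of x] by simp
qed

lemma unitrade_complete_or_large:
  "unitrade (Suc k) V U \<Longrightarrow> U \<noteq> {} \<Longrightarrow>
    (\<exists>A. A \<subseteq> V \<and> card A = k + 2 \<and> U = subsets_of_card (Suc k) A) \<or> 2 * (k + 1) \<le> card U"
proof (induction k arbitrary: U)
  case 0
  then show ?case using unitrade_card_ge[of 0 V U] by simp
next
  case (Suc k)
  note U = \<open>unitrade (Suc (Suc k)) V U\<close>
  obtain b x where x: "b \<in> U" "x \<in> b"
    using unitrade_blockE[OF Suc.prems] .
  note S = unitrade_split_at_point[OF U x]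
  have "(\<exists>A. A \<subseteq> V \<and> card A = k + 2 \<and> derived U x = subsets_of_card (Suc k) A)
    \<or> 2 * (k + 2) \<le> card U"
  proof (cases "card (residual U x) = 1")
    case True
    then obtain C where "residual U x = {C}" by (rule card_1_singletonE)
    then show ?thesis using derived_of_single_residual[OF U x] by auto
  next
    case False
    then have "2 \<le> card (residual U x)" using S(4,5) card_0_eq by fastforce
    from Suc.IH[OF S(2,3)] show ?thesis
    proof
      assume "2 * (k + 1) \<le> card (derived U x)"
      then show ?thesis using S(6) \<open>2 \<le> card (residual U x)\<close> by simp
    qed blast
  qed
  then show ?case
    using complete_derived_imp_complete_or_large[OF U S(1)] by auto
qed

lemma sum_degrees:
  assumes "finite U" "finite N" "\<Union>U \<subseteq> N"
  shows "(\<Sum>x\<in>N. card {b\<in>U. x \<in> b}) = (\<Sum>b\<in>U. card b)"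
proof (rule sum_multicount_gen[OF assms(2,1)], intro ballI)
  fix b assume "b \<in> U"
  then have "{x\<in>N. x \<in> b} = b" using assms(3) by blast
  then show "card {x\<in>N. x \<in> b} = card b" by simp
qed

lemma even_triangles_cut:
  assumes sym: "\<And>u w. E u w = E w u"
    and triangle: "\<And>u v w. u \<in> N \<Longrightarrow> v \<in> N \<Longrightarrow> w \<in> N \<Longrightarrow> u \<noteq> v \<Longrightarrow> u \<noteq> w \<Longrightarrow> v \<noteq> w \<Longrightarrow>
      E v w \<longleftrightarrow> (E u v \<longleftrightarrow> \<not> E u w)"
  obtains C where "C \<subseteq> N" "\<And>u w. u \<in> N \<Longrightarrow> w \<in> N \<Longrightarrow> u \<noteq> w \<Longrightarrow> E u w \<longleftrightarrow> (u \<in> C \<longleftrightarrow> w \<notin> C)"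
proof (cases "N = {}")
  case False
  then obtain q where "q \<in> N" by blast
  define C where "C = {w\<in>N. w \<noteq> q \<and> E q w}"
  have "E u w \<longleftrightarrow> (u \<in> C \<longleftrightarrow> w \<notin> C)" if "u \<in> N" "w \<in> N" "u \<noteq> w" for u w
    using that triangle[OF \<open>q \<in> N\<close>, of u w] sym[of u q] sym[of w q]
    unfolding C_def by (cases "u = q"; cases "w = q") auto
  then show thesis using that[of C] unfolding C_def by blast
qed simp

lemma card_three_Int_parity:
  assumes "X \<noteq> Y" "X \<noteq> Z" "Y \<noteq> Z"
  shows "even (card ({X, Y, Z} \<inter> U)) \<longleftrightarrow> (X \<in> U \<longleftrightarrow> (Y \<in> U \<longleftrightarrow> \<not> Z \<in> U))"
  using assms by (cases "X \<in> U"; cases "Y \<in> U"; cases "Z \<in> U") (simp_all add: Int_insert_left)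

lemma unitrade_block_pair:
  assumes U: "unitrade k V U" and N: "\<Union>U \<subseteq> N" "card N = k + 2" and "b \<in> U"
  obtains u w where "u \<in> N" "w \<in> N" "u \<noteq> w" "b = N - {u, w}"
proof -
  have "finite N" using N(2) card.infinite by fastforce
  have "b \<subseteq> N" "card b = k" using \<open>b \<in> U\<close> unitrade_block[OF U] N(1) by auto
  then have "card (N - b) = 2"
    using N(2) \<open>finite N\<close> by (simp add: card_Diff_subset finite_subset)
  then obtain u w where "N - b = {u, w}" "u \<noteq> w" by (meson card_2_iff)
  then show thesis using that \<open>b \<subseteq> N\<close> by blast
qed

lemma unitrade_triangle_parity:
  assumes U: "unitrade k V U" and N: "N \<subseteq> V" "\<Union>U \<subseteq> N" "card N = k + 2"
    and uvw: "u \<in> N" "v \<in> N" "w \<in> N" "u \<noteq> v" "u \<noteq> w" "v \<noteq> w"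
  shows "N - {v, w} \<in> U \<longleftrightarrow> (N - {u, v} \<in> U \<longleftrightarrow> N - {u, w} \<notin> U)"
proof -
  define T where "T = N - {u, v, w}"
  have "finite N" using N(3) card.infinite by fastforce
  have "card T = k - 1"
    unfolding T_def using uvw N(3) \<open>finite N\<close> by (simp add: card_Diff_subset)
  then have "even (card {b\<in>U. T \<subseteq> b})"
    using unitrade_even[OF U] N(1) unfolding T_def by blast
  moreover have "{b\<in>U. T \<subseteq> b} = {N - {v, w}, N - {u, v}, N - {u, w}} \<inter> U"
  proof (intro equalityI subsetI)
    fix b assume b: "b \<in> {b\<in>U. T \<subseteq> b}"
    then obtain p q where pq: "p \<in> N" "q \<in> N" "p \<noteq> q" "b = N - {p, q}"
      using unitrade_block_pair[OF U N(2,3)] by blast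
    then have "p \<in> {u, v, w}" "q \<in> {u, v, w}"
      using b unfolding T_def by auto
    then show "b \<in> {N - {v, w}, N - {u, v}, N - {u, w}} \<inter> U"
      using b pq by (auto simp: insert_commute)
  qed (auto simp: T_def)
  moreover have "N - {v, w} \<noteq> N - {u, v}" "N - {v, w} \<noteq> N - {u, w}" "N - {u, v} \<noteq> N - {u, w}"
    using uvw by auto
  ultimately show ?thesis
    using card_three_Int_parity[of "N - {v, w}" "N - {u, v}" "N - {u, w}" U] by simp
qed

text \<open>Each block omits exactly two points of \<open>N\<close>; by the parity condition on the sets
  \<open>N - {u, v, w}\<close>, every triangle of the graph of omitted pairs has an even number of edges.\<close>

lemma unitrade_on_k_plus_2_points:
  assumes U: "unitrade k V U" and N: "N \<subseteq> V" "\<Union>U \<subseteq> N" "card N = k + 2"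
  obtains C where "C \<subseteq> N" "U = (\<lambda>(p, q). N - {p, q}) ` (C \<times> (N - C))"
proof -
  define E where "E u w \<longleftrightarrow> N - {u, w} \<in> U" for u w
  have E_sym: "E u w = E w u" for u w
    unfolding E_def by (simp add: insert_commute)
  obtain C where C: "C \<subseteq> N"
    "\<And>u w. u \<in> N \<Longrightarrow> w \<in> N \<Longrightarrow> u \<noteq> w \<Longrightarrow> E u w \<longleftrightarrow> (u \<in> C \<longleftrightarrow> w \<notin> C)"
    using even_triangles_cut[of E N, OF E_sym unitrade_triangle_parity[OF U N, folded E_def]] by blast
  have "U = (\<lambda>(p, q). N - {p, q}) ` (C \<times> (N - C))"
  proof (intro equalityI subsetI)
    fix b assume "b \<in> U"
    then obtain u w where uw: "u \<in> N" "w \<in> N" "u \<noteq> w" "b = N - {u, w}"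
      using unitrade_block_pair[OF U N(2,3)] by blast
    then have "u \<in> C \<longleftrightarrow> w \<notin> C" using C(2)[of u w] \<open>b \<in> U\<close> unfolding E_def by simp
    then have "(u, w) \<in> C \<times> (N - C) \<or> (w, u) \<in> C \<times> (N - C)" using uw by auto
    moreover have "b = N - {w, u}" using uw by (simp add: insert_commute)
    ultimately show "b \<in> (\<lambda>(p, q). N - {p, q}) ` (C \<times> (N - C))"
      using uw(4) by (auto intro: rev_image_eqI)
  next
    fix b assume "b \<in> (\<lambda>(p, q). N - {p, q}) ` (C \<times> (N - C))"
    then obtain p q where pq: "p \<in> C" "q \<in> N - C" "b = N - {p, q}" by blast
    then have "p \<noteq> q" "p \<in> N" using C(1) by auto
    then show "b \<in> U" using C(2)[of p q] pq unfolding E_def by simp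
  qed
  then show thesis using that C(1) by blast
qed

lemma card_cut_complements:
  assumes "finite N" "C \<subseteq> N"
  shows "card ((\<lambda>(p, q). N - {p, q}) ` (C \<times> (N - C))) = card C * card (N - C)"
proof -
  have "inj_on (\<lambda>(p, q). N - {p, q}) (C \<times> (N - C))"
  proof (rule inj_onI, clarify)
    fix p q p' q'
    assume pq: "p \<in> C" "q \<in> N" "q \<notin> C" "p' \<in> C" "q' \<in> N" "q' \<notin> C"
      and "N - {p, q} = N - {p', q'}"
    then have "{p, q} = {p', q'}"
      using assms(2) by (metis Diff_Diff_Int Int_absorb1 empty_subsetI insert_subset subsetD)
    then show "p = p' \<and> q = q'" using pq by (auto simp: doubleton_eq_iff)
  qed
  then show ?thesis
    using assms by (simp add: card_image card_cartesian_product)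
qed

lemma pair_complements_swap:
  "(\<lambda>(p, q). N - {p, q}) ` (A \<times> B) = (\<lambda>(p, q). N - {p, q}) ` (B \<times> A)"
  by (auto simp: insert_commute image_iff)

lemma equivalent_subsets_of_card:
  assumes "finite A" "finite B" "card A = card B" "B \<subseteq> V"
  shows "equivalent A (subsets_of_card k A) V (subsets_of_card k B)"
proof -
  obtain g where g: "bij_betw g A B"
    using finite_same_card_bij[OF assms(1-3)] ..
  then have "image g ` subsets_of_card k A = subsets_of_card k B"
    using image_subsets_of_card[of g A k] unfolding bij_betw_def by simp
  then show ?thesis
    using g assms(4) unfolding equivalent_def bij_betw_def by blast
qed

lemma two_disjoint_W5_of_union_of_two_complete:
  assumes "finite V" "union_of_two_complete 5 V U" "card U = 12"
  shows "\<exists>W W'. unitrade 5 V W \<and> unitrade 5 V W' \<and> W \<inter> W' = {} \<and> U = W \<union> W' \<and>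
            equivalent {1..6} W5 V W \<and> equivalent {1..6} W5 V W'"
proof -
  obtain B1 B2 where B: "B1 \<subseteq> V" "B2 \<subseteq> V" "card B1 = 6" "card B2 = 6"
    and U: "U = subsets_of_card 5 B1 \<union> subsets_of_card 5 B2"
    using assms(2) unfolding union_of_two_complete_def by auto
  have "finite B1" "finite B2"
    using B assms(1) finite_subset by blast+
  have "card (subsets_of_card 5 B1) = 6" "card (subsets_of_card 5 B2) = 6"
    using card_subsets_of_card_Suc[of B1 5] card_subsets_of_card_Suc[of B2 5] B by simp_all
  then have "subsets_of_card 5 B1 \<inter> subsets_of_card 5 B2 = {}"
    using card_Un_Int[of "subsets_of_card 5 B1" "subsets_of_card 5 B2"] U assms(3)
      \<open>finite B1\<close> \<open>finite B2\<close> by (simp add: finite_subsets_of_card)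
  moreover have "unitrade 5 V (subsets_of_card 5 B1)" "unitrade 5 V (subsets_of_card 5 B2)"
    using unitrade_subsets_of_card[of V _ 4] assms(1) B by simp_all
  moreover have "equivalent {1..6} W5 V (subsets_of_card 5 B1)" "equivalent {1..6} W5 V (subsets_of_card 5 B2)"
    unfolding W5_def subsets_of_card_def[symmetric]
    using equivalent_subsets_of_card[of "{1..6::nat}"] B \<open>finite B1\<close> \<open>finite B2\<close> by simp_all
  ultimately show ?thesis using U by blast
qed

lemma S_trade_eq: "S_trade = (\<lambda>(i, j). {1..7::nat} - {i, j}) ` ({1..4} \<times> {5..7})"
proof -
  have "{1..4::nat} = {1, 2, 3, 4}" "{5..7::nat} = {5, 6, 7}" "{1..7::nat} = {1, 2, 3, 4, 5, 6, 7}"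
    by auto
  then show ?thesis unfolding S_trade_def by (simp add: insert_Diff_if insert_commute)
qed

lemma equivalent_S_trade:
  assumes "P \<inter> Q = {}" "card P = 4" "card Q = 3" "P \<union> Q \<subseteq> V"
  shows "equivalent {1..7} S_trade V ((\<lambda>(p, q). (P \<union> Q) - {p, q}) ` (P \<times> Q))"
proof -
  obtain g1 where g1: "bij_betw g1 {1..4::nat} P"
    using assms(2) finite_same_card_bij[of "{1..4::nat}" P] card.infinite by fastforce
  obtain g2 where g2: "bij_betw g2 {5..7::nat} Q"
    using assms(3) finite_same_card_bij[of "{5..7::nat}" Q] card.infinite by fastforce
  define f where "f i = (if i \<le> 4 then g1 i else g2 i)" for i
  have f1: "bij_betw f {1..4} P" using g1 by (rule bij_betw_cong[THEN iffD1, rotated]) (simp add: f_def)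
  have f2: "bij_betw f {5..7} Q" using g2 by (rule bij_betw_cong[THEN iffD1, rotated]) (simp add: f_def)
  have "{1..4} \<union> {5..7} = {1..7::nat}" by auto
  then have "bij_betw f {1..7} (P \<union> Q)"
    using bij_betw_combine[OF f1 f2 assms(1)] by simp
  then have inj: "inj_on f {1..7}" and im: "f ` {1..7} = P \<union> Q"
    unfolding bij_betw_def by simp_all
  have "image f ` S_trade = (\<lambda>(i, j). (P \<union> Q) - {f i, f j}) ` ({1..4} \<times> {5..7})"
    unfolding S_trade_eq image_image
  proof (intro image_cong refl, clarify)
    fix i j :: nat assume "i \<in> {1..4}" "j \<in> {5..7}"
    then have "f ` ({1..7} - {i, j}) = f ` {1..7} - f ` {i, j}"
      by (intro inj_on_image_set_diff[OF inj]) auto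
    then show "f ` ({1..7} - {i, j}) = (P \<union> Q) - {f i, f j}"
      unfolding im by simp
  qed
  also have "\<dots> = (\<lambda>(p, q). (P \<union> Q) - {p, q}) ` (map_prod f f ` ({1..4} \<times> {5..7}))"
    by (simp add: image_image case_prod_beta)
  also have "map_prod f f ` ({1..4} \<times> {5..7}) = P \<times> Q"
    using f1 f2 by (simp add: bij_betw_def map_prod_surj_on)
  finally have "(\<lambda>(p, q). (P \<union> Q) - {p, q}) ` (P \<times> Q) = image f ` S_trade" ..
  then show ?thesis
    unfolding equivalent_def using inj im assms(4) by (intro exI[of _ f]) simp
qed

lemma union_of_two_complete_of_two_residual_blocks:
  assumes U: "unitrade (Suc (Suc k)) V U" "x \<in> V" and R: "residual U x = {C1, C2}"
    and D: "card (derived U x) = 2 * (k + 2)"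
  shows "union_of_two_complete (Suc (Suc k)) V U"
proof -
  have C: "C \<subseteq> V \<and> card C = Suc (Suc k) \<and> finite C \<and> x \<notin> C" if "C \<in> residual U x" for C
    using that unitrade_block[OF U(1)] unitrade_finite_block[OF U(1)] unfolding residual_def by auto
  have C1: "C1 \<subseteq> V" "card C1 = Suc (Suc k)" "finite C1" "x \<notin> C1"
    and C2: "C2 \<subseteq> V" "card C2 = Suc (Suc k)" "finite C2" "x \<notin> C2"
    using C[of C1] C[of C2] R by simp_all
  define K1 K2 where "K1 = subsets_of_card (Suc k) C1" and "K2 = subsets_of_card (Suc k) C2"
  have "finite (K1 \<union> K2)" "card K1 = Suc (Suc k)" "card K2 = Suc (Suc k)"
    unfolding K1_def K2_def using C1 C2
    by (simp_all add: finite_subsets_of_card card_subsets_of_card_Suc)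
  moreover have "derived U x \<subseteq> K1 \<union> K2"
    using derived_subset_residual[OF U] R unfolding K1_def K2_def by simp
  ultimately have "derived U x = K1 \<union> K2"
    using D card_Un_le[of K1 K2] by (intro card_seteq) simp_all
  note U_eq = residual_Un_derived[of U x, unfolded R this]
  have "subsets_of_card (Suc (Suc k)) (insert x C1) = insert C1 (insert x ` K1)"
    "subsets_of_card (Suc (Suc k)) (insert x C2) = insert C2 (insert x ` K2)"
    unfolding K1_def K2_def using C1 C2 by (simp_all add: subsets_of_card_insert)
  then have "U = subsets_of_card (Suc (Suc k)) (insert x C1) \<union> subsets_of_card (Suc (Suc k)) (insert x C2)"
    by (subst U_eq) blast
  moreover have "insert x C1 \<subseteq> V" "card (insert x C1) = Suc (Suc (Suc k))"
    "insert x C2 \<subseteq> V" "card (insert x C2) = Suc (Suc (Suc k))"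
    using C1 C2 U(2) by simp_all
  ultimately show ?thesis
    unfolding union_of_two_complete_def by blast
qed

lemma unitrade_5_card_12_complete_derived:
  assumes U: "unitrade 5 V U" "card U = 12" "x \<in> V"
    and A: "A \<subseteq> V" "card A = 5" "derived U x = subsets_of_card 4 A"
  shows "union_of_two_complete 5 V U"
proof -
  define W Y where "W = subsets_of_card 5 (insert x A)" and "Y = sym_diff (residual U x) {A}"
  have "finite V" using unitrade_finite_points[OF U(1)] .
  have T: "x \<notin> A" "sym_diff U W = Y" "unitrade (Suc 4) V Y"
    using unitrade_toggle_residual[of 3 V U x A] U A unfolding W_def Y_def by simp_all
  have "card (residual U x) = 7"
    using card_residual_derived[OF unitrade_finite[OF U(1)], of x] U(2) A(2,3)
      card_subsets_of_card_Suc[of A 4] by simp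
  then have "card Y \<in> {6, 8}"
    using card_sym_diff_singleton[of "residual U x" A] unitrade_finite[OF U(1)]
    unfolding Y_def residual_def by auto
  then obtain B where B: "B \<subseteq> V" "card B = 6" "Y = subsets_of_card 5 B"
    using unitrade_complete_or_large[OF T(3)] by fastforce
  have "card (insert x A) = 6"
    using A(2) T(1) finite_subset[OF A(1) \<open>finite V\<close>] by simp
  have "U \<subseteq> W \<union> Y" using T(2) by blast
  moreover have "finite (W \<union> Y)" "card (W \<union> Y) \<le> 12"
    using card_Un_le[of W Y] B \<open>card (insert x A) = 6\<close>
      card_subsets_of_card_Suc[of B 5] card_subsets_of_card_Suc[of "insert x A" 5]
      finite_subset[OF B(1) \<open>finite V\<close>] finite_subset[OF A(1) \<open>finite V\<close>]
    unfolding W_def by (simp_all add: finite_subsets_of_card)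
  ultimately have "U = W \<union> Y"
    using U(2) by (intro card_seteq) simp_all
  moreover have "insert x A \<subseteq> V" using A(1) U(3) by simp
  ultimately show ?thesis
    using B \<open>card (insert x A) = 6\<close> unfolding union_of_two_complete_def W_def
    by (intro exI[of _ "insert x A"] exI[of _ B]) simp
qed

lemma degree_in_unitrade_5_card_12:
  assumes U5: "unitrade 5 V U" and "card U = 12" and x: "b \<in> U" "x \<in> b"
  shows "union_of_two_complete 5 V U \<or> card {b\<in>U. x \<in> b} \<in> {8, 9}"
proof -
  have U: "unitrade (Suc (Suc 3)) V U" using U5 by simp
  note S = unitrade_split_at_point[OF U x]
  have card_U: "card (derived U x) + card (residual U x) = 12"
    using S(6) \<open>card U = 12\<close> by simp
  from unitrade_complete_or_large[OF S(2,3)] show ?thesis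
  proof
    assume "2 * (3 + 1) \<le> card (derived U x)"
    moreover have "card (residual U x) \<noteq> 0" using S(4,5) by simp
    ultimately consider "card (residual U x) = 1" | "card (residual U x) = 2"
      | "card (residual U x) \<in> {3, 4}"
      using card_U by force
    then show ?thesis
    proof cases
      case 1
      then obtain C where "residual U x = {C}" by (rule card_1_singletonE)
      then have "card (derived U x) = 5"
        using derived_of_single_residual[OF U x] card_subsets_of_card_Suc[of C 4] by simp
      then show ?thesis using card_U 1 by simp
    next
      case 2
      then obtain C1 C2 where "residual U x = {C1, C2}" by (meson card_2_iff)
      then have "union_of_two_complete (Suc (Suc 3)) V U"
        using union_of_two_complete_of_two_residual_blocks[OF U S(1)] card_U 2 by simp
      then show ?thesis by simp
    next
      case 3
      then show ?thesis using card_U card_derived[of U x] by auto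
    qed
  next
    assume "\<exists>A. A \<subseteq> V \<and> card A = 3 + 2 \<and> derived U x = subsets_of_card (Suc 3) A"
    then show ?thesis
      using unitrade_5_card_12_complete_derived[OF U5 \<open>card U = 12\<close> S(1)] by auto
  qed
qed

lemma card_Union_degree_8_or_9:
  assumes U: "unitrade 5 V U" "card U = 12"
    and deg: "\<And>x. x \<in> \<Union>U \<Longrightarrow> card {b\<in>U. x \<in> b} \<in> {8, 9}"
  shows "card (\<Union>U) = 7"
proof -
  have "\<Union>U \<subseteq> V" using unitrade_block[OF U(1)] by blast
  then have "finite (\<Union>U)" using unitrade_finite_points[OF U(1)] finite_subset by blast
  have "(\<Sum>x\<in>\<Union>U. card {b\<in>U. x \<in> b}) = (\<Sum>b\<in>U. card b)"
    using sum_degrees[OF unitrade_finite[OF U(1)] \<open>finite (\<Union>U)\<close>] by simp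
  also have "\<dots> = (\<Sum>b\<in>U. 5)"
    using unitrade_block[OF U(1)] by (intro sum.cong) simp_all
  also have "\<dots> = 60"
    using U(2) by simp
  finally have sum_60: "(\<Sum>x\<in>\<Union>U. card {b\<in>U. x \<in> b}) = 60" .
  have deg_bounds: "8 \<le> card {b\<in>U. x \<in> b}" "card {b\<in>U. x \<in> b} \<le> 9" if "x \<in> \<Union>U" for x
    using deg[OF that] by auto
  have "card (\<Union>U) * 8 \<le> (\<Sum>x\<in>\<Union>U. card {b\<in>U. x \<in> b})"
    using sum_bounded_below[of "\<Union>U" 8 "\<lambda>x. card {b\<in>U. x \<in> b}"] deg_bounds(1) by simp
  moreover have "(\<Sum>x\<in>\<Union>U. card {b\<in>U. x \<in> b}) \<le> card (\<Union>U) * 9"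
    using sum_bounded_above[of "\<Union>U" "\<lambda>x. card {b\<in>U. x \<in> b}" 9] deg_bounds(2) by simp
  ultimately show ?thesis using sum_60 by linarith
qed

lemma cut_complements_side_of_card_4:
  assumes "finite N" "card N = 7" "C \<subseteq> N" "card ((\<lambda>(p, q). N - {p, q}) ` (C \<times> (N - C))) = 12"
  obtains P where "P \<subseteq> N" "card P = 4"
    "(\<lambda>(p, q). N - {p, q}) ` (C \<times> (N - C)) = (\<lambda>(p, q). N - {p, q}) ` (P \<times> (N - P))"
proof -
  have card_N_C: "card (N - C) = 7 - card C"
    using card_Diff_subset[OF finite_subset[OF assms(3,1)] assms(3)] assms(2) by simp
  then have "card C * (7 - card C) = 12"
    using card_cut_complements[OF assms(1,3)] assms(4) by simp
  moreover have "card C \<in> {0, 1, 2, 3, 4, 5, 6, 7}"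
    using card_mono[OF assms(1,3)] assms(2) by auto
  ultimately have "card C = 4 \<or> card C = 3" by auto
  then show thesis
  proof
    assume "card C = 3"
    show thesis
    proof (rule that[of "N - C"])
      show "card (N - C) = 4" using card_N_C \<open>card C = 3\<close> by simp
      have "N - (N - C) = C" using assms(3) by blast
      then show "(\<lambda>(p, q). N - {p, q}) ` (C \<times> (N - C))
          = (\<lambda>(p, q). N - {p, q}) ` ((N - C) \<times> (N - (N - C)))"
        by (rule ssubst) (rule pair_complements_swap)
    qed blast
  qed (use assms(3) that in blast)
qed

lemma unitrade_5_card_12_on_7_points:
  assumes U: "unitrade 5 V U" "card U = 12" and "card (\<Union>U) = 7"
  shows "equivalent {1..7} S_trade V U"
proof -
  define N where "N = \<Union>U"
  have "finite N" "card N = 7" "N \<subseteq> V"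
    using assms card.infinite unitrade_block[OF U(1)] unfolding N_def by fastforce+
  obtain C where C: "C \<subseteq> N" "U = (\<lambda>(p, q). N - {p, q}) ` (C \<times> (N - C))"
    using unitrade_on_k_plus_2_points[of 5 V U N] U(1) \<open>card N = 7\<close> \<open>N \<subseteq> V\<close>
    unfolding N_def by auto
  obtain P where P: "P \<subseteq> N" "card P = 4" "U = (\<lambda>(p, q). N - {p, q}) ` (P \<times> (N - P))"
    using cut_complements_side_of_card_4[OF \<open>finite N\<close> \<open>card N = 7\<close> C(1)] U(2)
    unfolding C(2)[symmetric] by blast
  have "card (N - P) = 3" "P \<union> (N - P) = N"
    using P \<open>card N = 7\<close> \<open>finite N\<close> by (auto simp: card_Diff_subset finite_subset)
  then show ?thesis
    using equivalent_S_trade[of P "N - P" V] P \<open>N \<subseteq> V\<close> by simp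
qed

theorem proposition14:
  fixes V :: "'a set" and U :: "'a set set"
  assumes "unitrade 5 V U" and "card U = 12"
  shows "(\<exists>W W'. unitrade 5 V W \<and> unitrade 5 V W' \<and> W \<inter> W' = {} \<and> U = W \<union> W' \<and>
            equivalent {1..6} W5 V W \<and> equivalent {1..6} W5 V W')
         \<or> equivalent {1..7} S_trade V U"
proof (cases "union_of_two_complete 5 V U")
  case True
  then show ?thesis
    using two_disjoint_W5_of_union_of_two_complete[OF unitrade_finite_points[OF assms(1)] _ assms(2)] by blast
next
  case False
  then have "card {b\<in>U. x \<in> b} \<in> {8, 9}" if "x \<in> \<Union>U" for x
    using degree_in_unitrade_5_card_12[OF assms] that by blast
  then have "card (\<Union>U) = 7"
    by (rule card_Union_degree_8_or_9[OF assms])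
  then show ?thesis
    using unitrade_5_card_12_on_7_points[OF assms] by blast
qed

end
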